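(* Let $X$, $Z$ be topological vector spaces, $C\subseteq Z$ a nonempty closed convex cone with $C^-\neq\{0\}$, and $f:X\to\mathcal{F}(Z,C)$ convex. If $f$ is lower continuous at $x_0\in{\rm dom\,} f$, then $f$ is lower lattice-semicontinuous at $x_0$.
   Context: $\mathcal{F}(Z,C)=\{A\subseteq Z\colon A=\operatorname{cl}(A+C)\}$ (empty set included); $C^-=\{z^*\in Z^*\colon z^*(z)\le0\ \forall z\in C\}$; ${\rm dom\,} f=\{x\colon f(x)\neq\emptyset\}$. $f$ is convex iff $tf(x_1)+(1-t)f(x_2)\subseteq f(tx_1+(1-t)x_2)$ for all $x_1,x_2$, $t\in(0,1)$. $f$ is lower continuous at $x_0$ iff for every $z_0\in f(x_0)$ and every neighborhood $V$ of $z_0$ there is a neighborhood $U$ of $x_0$ with $f(x)\cap V\neq\emptyset$ for all $x\in U$. $f$ is lower lattice-semicontinuous at $x_0$ iff $f(x_0)\supseteq\bigcap_{U\in\mathcal{N}(x_0)}\operatorname{cl}\bigcup_{x\in U}f(x)$ ($\mathcal{N}(x_0)$ the neighborhoods of $x_0$); equivalently, for every $z_0\notin f(x_0)$ there exist a neighborhood $U$ of $x_0$ and a neighborhood $V$ of $z_0$ with $z\notin f(x)$ for all $x\in U$, $z\in V$. *)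

theory Defs
  imports "HOL-Analysis.Analysis"
begin

text \<open>Real topological vector spaces: a real vector space with a topology making
  addition and scalar multiplication jointly continuous (no separation axiom);
  joint continuity of scalar multiplication is spelled out with open sets.\<close>
class topological_real_vector = real_vector + topological_ab_group_add +
  assumes continuous_scaleR_joint:
    "\<And>(a::real) (x::'a) W. open W \<Longrightarrow> a *\<^sub>R x \<in> W \<Longrightarrow>
       \<exists>A V. open A \<and> a \<in> A \<and> open V \<and> x \<in> V \<and>
             (\<forall>b\<in>A. \<forall>y\<in>V. b *\<^sub>R y \<in> W)"

definition nbhds :: "'a::topological_space \<Rightarrow> 'a set set" where
  "nbhds x = {U. \<exists>V. open V \<and> x \<in> V \<and> V \<subseteq> U}"

definition msum :: "'a::ab_group_add set \<Rightarrow> 'a set \<Rightarrow> 'a set" where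
  "msum A B = {a + b | a b. a \<in> A \<and> b \<in> B}"

text \<open>The family F(Z,C) of closed C-upper sets (empty set included).\<close>
definition upper_closed_sets :: "'a::topological_real_vector set \<Rightarrow> 'a set set" where
  "upper_closed_sets C = {A. A = closure (msum A C)}"

definition top_dual :: "('a::topological_real_vector \<Rightarrow> real) set" where
  "top_dual = {l. linear l \<and> continuous_on UNIV l}"

definition neg_dual_cone :: "'a::topological_real_vector set \<Rightarrow> ('a \<Rightarrow> real) set" where
  "neg_dual_cone C = {l \<in> top_dual. \<forall>z\<in>C. l z \<le> 0}"

definition sv_dom :: "('a \<Rightarrow> 'b set) \<Rightarrow> 'a set" where
  "sv_dom f = {x. f x \<noteq> {}}"

definition sv_convex :: "('a::real_vector \<Rightarrow> 'b::real_vector set) \<Rightarrow> bool" where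
  "sv_convex f \<longleftrightarrow> (\<forall>x1 x2 t. 0 < t \<and> t < 1 \<longrightarrow>
      msum ((\<lambda>z. t *\<^sub>R z) ` f x1) ((\<lambda>z. (1 - t) *\<^sub>R z) ` f x2)
        \<subseteq> f (t *\<^sub>R x1 + (1 - t) *\<^sub>R x2))"

definition lower_continuous_at ::
  "('a::topological_space \<Rightarrow> 'b::topological_space set) \<Rightarrow> 'a \<Rightarrow> bool" where
  "lower_continuous_at f x0 \<longleftrightarrow>
     (\<forall>z0\<in>f x0. \<forall>V\<in>nbhds z0. \<exists>U\<in>nbhds x0. \<forall>x\<in>U. f x \<inter> V \<noteq> {})"

definition lower_lattice_semicontinuous_at ::
  "('a::topological_space \<Rightarrow> 'b::topological_space set) \<Rightarrow> 'a \<Rightarrow> bool" where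
  "lower_lattice_semicontinuous_at f x0 \<longleftrightarrow>
     (\<Inter>U\<in>nbhds x0. closure (\<Union>x\<in>U. f x)) \<subseteq> f x0"

end

theory Submission
  imports Defs
begin

text \<open>Suppose z0 is not in f x0 and pick z1 in f x0. Since f x0 is closed, for some t < 1
  close to 1 every combination t y + (1 - t) y1 with y near z0 and y1 near z1 stays outside
  f x0. For x near x0 the point x2 = (x0 - t x) / (1 - t) is near x0, so by lower continuity
  f x2 meets the neighbourhood of z1; convexity then forces f x to avoid the neighbourhood
  of z0. Hence z0 is not in the closure of the values of f near x0.\<close>

lemma open_vimage_scaleR_plus:
  fixes W :: "'a::topological_real_vector set"
  assumes "open W"
  shows "open ((\<lambda>y. a *\<^sub>R y + c) -` W)"
proof (subst open_subopen, intro ballI)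
  fix y assume y: "y \<in> (\<lambda>y. a *\<^sub>R y + c) -` W"
  have "continuous_on UNIV (\<lambda>v::'a. v + c)" by (intro continuous_intros)
  then have "open ((\<lambda>v. v + c) -` W)"
    using assms by (simp add: continuous_on_open_vimage)
  then obtain A V where "open V" "y \<in> V" "\<forall>b\<in>A. \<forall>v\<in>V. b *\<^sub>R v \<in> (\<lambda>v. v + c) -` W" "a \<in> A"
    using continuous_scaleR_joint[of "(\<lambda>v. v + c) -` W" a y] y by auto
  then show "\<exists>T. open T \<and> y \<in> T \<and> T \<subseteq> (\<lambda>y. a *\<^sub>R y + c) -` W" by auto
qed

lemma open_plus_split_nbhds:
  fixes W :: "'a::topological_ab_group_add set"
  assumes "open W" "a + b \<in> W"
  obtains P Q where "open P" "a \<in> P" "open Q" "b \<in> Q" "\<forall>p\<in>P. \<forall>q\<in>Q. p + q \<in> W"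
proof -
  have "eventually (\<lambda>y. y \<in> W) (nhds (a + b))"
    using assms eventually_nhds by blast
  then have "eventually (\<lambda>x. fst x + snd x \<in> W) (nhds a \<times>\<^sub>F nhds b)"
    using tendsto_add_Pair[of a b] by (auto simp: filterlim_def eventually_filtermap le_filter_def)
  then obtain Pf Pg where "eventually Pf (nhds a)" "eventually Pg (nhds b)"
      "\<forall>x y. Pf x \<longrightarrow> Pg y \<longrightarrow> x + y \<in> W"
    by (auto simp: eventually_prod_filter)
  then show thesis using that unfolding eventually_nhds by metis
qed

lemma convex_combination_nbhds:
  fixes W :: "'a::topological_real_vector set"
  assumes "open W" "z0 \<in> W"
  obtains t V V1 where "0 < t" "t < 1" "open V" "z0 \<in> V" "open V1" "z1 \<in> V1"
    "\<forall>y\<in>V. \<forall>y1\<in>V1. t *\<^sub>R y + (1 - t) *\<^sub>R y1 \<in> W"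
proof -
  have "open ((\<lambda>v. v + z1) -` W)"
    using open_vimage_scaleR_plus[OF assms(1), of 1] by simp
  moreover have "1 *\<^sub>R (z0 - z1) \<in> (\<lambda>v. v + z1) -` W" using assms(2) by simp
  \<comment> \<open>joint continuity of scaling at (1, z0 - z1) lets t approach 1\<close>
  ultimately obtain A V where A: "open A" "(1::real) \<in> A" "z0 - z1 \<in> V"
      "\<forall>s\<in>A. \<forall>v\<in>V. s *\<^sub>R v \<in> (\<lambda>v. v + z1) -` W"
    using continuous_scaleR_joint[of "(\<lambda>v. v + z1) -` W" 1 "z0 - z1"] by blast
  from A(1,2) obtain e where e: "e > 0" "\<forall>s. dist s 1 < e \<longrightarrow> s \<in> A"
    using open_dist by metis
  define t where "t = max (1/2) (1 - e/2)"
  have t: "0 < t" "t < 1" "t \<in> A" using e by (auto simp: t_def dist_real_def)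
  have "t *\<^sub>R (z0 - z1) + z1 = t *\<^sub>R z0 + (1 - t) *\<^sub>R z1"
    by (simp add: scaleR_diff_right scaleR_diff_left)
  moreover have "t *\<^sub>R (z0 - z1) + z1 \<in> W" using A(3,4) t(3) by simp
  ultimately have "t *\<^sub>R z0 + (1 - t) *\<^sub>R z1 \<in> W" by simp
  then obtain P Q where PQ: "open P" "t *\<^sub>R z0 \<in> P" "open Q" "(1 - t) *\<^sub>R z1 \<in> Q"
      "\<forall>p\<in>P. \<forall>q\<in>Q. p + q \<in> W"
    by (rule open_plus_split_nbhds[OF assms(1)])
  show thesis
  proof
    show "open ((\<lambda>y. t *\<^sub>R y + 0) -` P)" "open ((\<lambda>y. (1 - t) *\<^sub>R y + 0) -` Q)"
      using open_vimage_scaleR_plus PQ(1,3) by blast+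
    show "\<forall>y\<in>(\<lambda>y. t *\<^sub>R y + 0) -` P. \<forall>y1\<in>(\<lambda>y. (1 - t) *\<^sub>R y + 0) -` Q.
        t *\<^sub>R y + (1 - t) *\<^sub>R y1 \<in> W"
      using PQ(5) by simp
  qed (use t PQ in simp_all)
qed

lemma nbhd_reflected_point:
  fixes x0 :: "'a::topological_real_vector"
  assumes "t < 1" "open U1" "x0 \<in> U1"
  obtains U where "open U" "x0 \<in> U" "\<forall>x\<in>U. \<exists>x2\<in>U1. t *\<^sub>R x + (1 - t) *\<^sub>R x2 = x0"
proof -
  define refl where "refl x = (- t / (1 - t)) *\<^sub>R x + (1 / (1 - t)) *\<^sub>R x0" for x
  have "open (refl -` U1)"
    unfolding refl_def using open_vimage_scaleR_plus[OF assms(2)] by blast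
  moreover have "refl x0 = x0"
  proof -
    have "refl x0 = (- t / (1 - t) + 1 / (1 - t)) *\<^sub>R x0"
      unfolding refl_def by (rule scaleR_add_left [symmetric])
    also have "- t / (1 - t) + 1 / (1 - t) = 1"
      using assms(1) by (simp add: field_simps)
    finally show ?thesis by simp
  qed
  moreover have "t *\<^sub>R x + (1 - t) *\<^sub>R refl x = x0" for x
  proof -
    have "t *\<^sub>R x + (1 - t) *\<^sub>R refl x
        = t *\<^sub>R x + ((1 - t) * (- t / (1 - t))) *\<^sub>R x + ((1 - t) * (1 / (1 - t))) *\<^sub>R x0"
      unfolding refl_def by (simp only: scaleR_add_right scaleR_scaleR add.assoc)
    also have "\<dots> = t *\<^sub>R x + (- t) *\<^sub>R x + 1 *\<^sub>R x0"
      using assms(1) by simp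
    finally show ?thesis by simp
  qed
  ultimately show thesis
    using that[of "refl -` U1"] assms(3) by auto
qed

lemma sv_convexD:
  assumes "sv_convex f" "0 < t" "t < 1" "z1 \<in> f x1" "z2 \<in> f x2"
  shows "t *\<^sub>R z1 + (1 - t) *\<^sub>R z2 \<in> f (t *\<^sub>R x1 + (1 - t) *\<^sub>R x2)"
proof -
  have "t *\<^sub>R z1 + (1 - t) *\<^sub>R z2
      \<in> msum ((\<lambda>z. t *\<^sub>R z) ` f x1) ((\<lambda>z. (1 - t) *\<^sub>R z) ` f x2)"
    using assms(4,5) by (auto simp: msum_def)
  then show ?thesis
    using assms(1-3) unfolding sv_convex_def by blast
qed

lemma closed_upper_closed_set:
  assumes "A \<in> upper_closed_sets C"
  shows "closed A"
proof -
  have "A = closure (msum A C)"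
    using assms by (simp add: upper_closed_sets_def)
  then show ?thesis
    by (metis closed_closure)
qed

lemma lower_continuous_imp_lower_lattice_semicontinuous:
  fixes f :: "'x::topological_real_vector \<Rightarrow> 'z::topological_real_vector set"
  assumes "sv_convex f" "closed (f x0)" "f x0 \<noteq> {}" "lower_continuous_at f x0"
  shows "lower_lattice_semicontinuous_at f x0"
  unfolding lower_lattice_semicontinuous_at_def
proof
  fix z0 assume z0: "z0 \<in> (\<Inter>U\<in>nbhds x0. closure (\<Union>x\<in>U. f x))"
  show "z0 \<in> f x0"
  proof (rule ccontr)
    assume "z0 \<notin> f x0"
    then have W: "open (- f x0)" "z0 \<in> - f x0" using assms(2) by auto
    obtain z1 where z1: "z1 \<in> f x0" using assms(3) by blast
    obtain t V V1 where t: "0 < t" "t < 1" and V: "open V" "z0 \<in> V"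
      and V1: "open V1" "z1 \<in> V1"
      and outside: "\<forall>y\<in>V. \<forall>y1\<in>V1. t *\<^sub>R y + (1 - t) *\<^sub>R y1 \<in> - f x0"
      by (rule convex_combination_nbhds[OF W])
    have "V1 \<in> nbhds z1"
      using V1 by (auto simp: nbhds_def)
    then obtain N where "N \<in> nbhds x0" and meets: "\<forall>x\<in>N. f x \<inter> V1 \<noteq> {}"
      using assms(4) z1 unfolding lower_continuous_at_def by blast
    then obtain U1 where U1: "open U1" "x0 \<in> U1" "U1 \<subseteq> N"
      by (auto simp: nbhds_def)
    obtain U where U: "open U" "x0 \<in> U"
      and reflect: "\<forall>x\<in>U. \<exists>x2\<in>U1. t *\<^sub>R x + (1 - t) *\<^sub>R x2 = x0"
      by (rule nbhd_reflected_point[OF t(2) U1(1,2)])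
    have "V \<inter> (\<Union>x\<in>U. f x) = {}"
    proof (intro equals0I)
      fix z assume "z \<in> V \<inter> (\<Union>x\<in>U. f x)"
      then obtain x where "x \<in> U" "z \<in> f x" "z \<in> V" by blast
      moreover obtain x2 where "x2 \<in> U1" "t *\<^sub>R x + (1 - t) *\<^sub>R x2 = x0"
        using reflect \<open>x \<in> U\<close> by blast
      moreover obtain z2 where "z2 \<in> f x2" "z2 \<in> V1"
        using meets U1(3) \<open>x2 \<in> U1\<close> by blast
      ultimately have "t *\<^sub>R z + (1 - t) *\<^sub>R z2 \<in> f x0"
        using sv_convexD[OF assms(1) t, of z x z2 x2] by simp
      then show False
        using outside \<open>z \<in> V\<close> \<open>z2 \<in> V1\<close> by blast
    qed
    moreover have "z0 \<in> closure (\<Union>x\<in>U. f x)"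
      using z0 U unfolding nbhds_def by blast
    ultimately show False
      using V(2) open_Int_closure_eq_empty[OF V(1)] by blast
  qed
qed

theorem mainTheorem8:
  fixes f :: "'x::topological_real_vector \<Rightarrow> 'z::topological_real_vector set"
    and C :: "'z set" and x0 :: 'x
  assumes "convex_cone C" and "closed C"
    and "neg_dual_cone C \<noteq> {(\<lambda>_. 0)}"
    and "\<forall>x. f x \<in> upper_closed_sets C"
    and "sv_convex f"
    and "x0 \<in> sv_dom f"
    and "lower_continuous_at f x0"
  shows "lower_lattice_semicontinuous_at f x0"
  \<comment> \<open>Of the hypotheses on C only the closedness of the values f x it implies is used.\<close>
proof (rule lower_continuous_imp_lower_lattice_semicontinuous)
  show "closed (f x0)" using assms(4) closed_upper_closed_set by blast
  show "f x0 \<noteq> {}" using assms(6) by (simp add: sv_dom_def)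
qed (fact assms)+

end
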